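(* Let $(X_i,\mu_i,Z_i)$, $i=1,\dots,n$, be i.i.d. with $\mathbb{E}[Z_i\mid\mu_i,X_i]=\mu_i$, $\mathrm{Var}[Z_i\mid\mu_i,X_i]=\sigma^2$ ($\sigma^2>0$ known). Let $\{1,\dots,n\}=I_1\sqcup I_2$ with $|I_1|=|I_2|=n/2$. For $k\in\{1,2\}$ let $\hat m_{I_k}$ be a regression function fitted (by a fixed procedure) using only $(X_i,Z_i)_{i\in I_k}$, and $\hat A_{I_2}=\big(\frac{1}{|I_2|}\sum_{i\in I_2}(\hat m_{I_1}(X_i)-Z_i)^2-\sigma^2\big)_+$, $\hat A_{I_1}=\big(\frac{1}{|I_1|}\sum_{i\in I_1}(\hat m_{I_2}(X_i)-Z_i)^2-\sigma^2\big)_+$. Define $\hat\mu_i^{\mathrm{EBCF}}=t^*_{\hat m_{I_1},\hat A_{I_2}}(X_i,Z_i)$ for $i\in I_2$ and $\hat\mu_i^{\mathrm{EBCF}}=t^*_{\hat m_{I_2},\hat A_{I_1}}(X_i,Z_i)$ for $i\in I_1$. Assume there exist $\Gamma,M<\infty$ with $\mathbb{E}[Z_i^4\mid\mu_i,X_i]\le\Gamma^4$, $|\mu_i|\le M$, and $\sup_x|\hat m_{I_k}(x)|\le M$ almost surely for $k=1,2$. Then, with $(X,\mu)$ a fresh independent draw from the same distribution and $\hat m_{n/2}$ denoting the fitted function based on $n/2$ samples $(X_i,Z_i)$, $$\frac1n\sum_{i=1}^n\mathbb{E}\big[(\mu_i-\hat\mu_i^{\mathrm{EBCF}})^2\big]\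 \le\ \frac{\sigma^2\,\mathbb{E}[(\hat m_{n/2}(X)-\mu)^2]}{\sigma^2+\mathbb{E}[(\hat m_{n/2}(X)-\mu)^2]}+O\Big(\frac{1}{\sqrt n}\Big).$$
   Context: For a function $\tilde m$ and $\tilde A\ge0$, $t^*_{\tilde m,\tilde A}(x,z)=\frac{\tilde A}{\sigma^2+\tilde A}z+\frac{\sigma^2}{\sigma^2+\tilde A}\tilde m(x)$. *)

theory Defs
  imports "HOL-Probability.Probability"
begin

text \<open>A data point is a triple (x, mu, z) :: 'x * real * real.
  A fitting procedure is  fit :: nat => (nat => 'x * real) => 'x => real :
  fit m d is the regression function fitted on the m observations d 0, ..., d (m-1)
  (each observation being a pair (X_i, Z_i)).\<close>

definition tstar :: "real \<Rightarrow> ('x \<Rightarrow> real) \<Rightarrow> real \<Rightarrow> 'x \<Rightarrow> real \<Rightarrow> real" where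
  "tstar s2 m A x z = A / (s2 + A) * z + s2 / (s2 + A) * m x"

definition obs :: "'x \<times> real \<times> real \<Rightarrow> 'x \<times> real" where
  "obs p = (fst p, snd (snd p))"

definition fitted_on ::
  "(nat \<Rightarrow> (nat \<Rightarrow> 'x \<times> real) \<Rightarrow> 'x \<Rightarrow> real) \<Rightarrow> nat set \<Rightarrow> (nat \<Rightarrow> 'x \<times> real \<times> real) \<Rightarrow> 'x \<Rightarrow> real" where
  "fitted_on fit I \<omega> = fit (card I) (restrict (\<lambda>j. obs (\<omega> (sorted_list_of_set I ! j))) {..<card I})"

definition Ahat :: "real \<Rightarrow> ('x \<Rightarrow> real) \<Rightarrow> nat set \<Rightarrow> (nat \<Rightarrow> 'x \<times> real \<times> real) \<Rightarrow> real" where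
  "Ahat s2 m J \<omega> = max 0 ((\<Sum>i\<in>J. (m (fst (\<omega> i)) - snd (snd (\<omega> i)))\<^sup>2) / real (card J) - s2)"

definition ebcf ::
  "real \<Rightarrow> (nat \<Rightarrow> (nat \<Rightarrow> 'x \<times> real) \<Rightarrow> 'x \<Rightarrow> real) \<Rightarrow> nat set \<Rightarrow> nat set \<Rightarrow> (nat \<Rightarrow> 'x \<times> real \<times> real) \<Rightarrow> nat \<Rightarrow> real" where
  "ebcf s2 fit I1 I2 \<omega> i =
     (if i \<in> I2 then tstar s2 (fitted_on fit I1 \<omega>) (Ahat s2 (fitted_on fit I1 \<omega>) I2 \<omega>) (fst (\<omega> i)) (snd (snd (\<omega> i)))
      else tstar s2 (fitted_on fit I2 \<omega>) (Ahat s2 (fitted_on fit I2 \<omega>) I1 \<omega>) (fst (\<omega> i)) (snd (snd (\<omega> i))))"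

end

theory Submission
  imports Defs
begin

text \<open>For a fixed regression function m with A = E (m X - \<mu>)\<twosuperior>, the noise Z - \<mu> is orthogonal to
  every bounded function of (X, \<mu>), which gives the bias-variance identity
  E (\<mu> - t*(m, A))\<twosuperior> = \<sigma>\<twosuperior> A / (\<sigma>\<twosuperior> + A). The shrinkage weight \<sigma>\<twosuperior> / (\<sigma>\<twosuperior> + A) is bounded by 1 and
  (1/\<sigma>\<twosuperior>)-Lipschitz in A, so replacing A by its estimate costs, after AM-GM with a weight t,
  t/2 E (Ahat - A)\<twosuperior> plus O(1/t). Cross-fitting makes the fitted function independent of the half
  sample on which Ahat is computed; there Ahat - A is dominated by a mean of n/2 i.i.d. centred
  residuals, so E (Ahat - A)\<twosuperior> = O(1/n) by the fourth-moment bound, and t = \<surd>n gives the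
  O(1/\<surd>n) remainder. Finally A \<mapsto> \<sigma>\<twosuperior> A / (\<sigma>\<twosuperior> + A) is concave, so Jensen's inequality over the
  randomness of the fitted function bounds the average of \<sigma>\<twosuperior> A / (\<sigma>\<twosuperior> + A) by its value at
  the mean of A.\<close>

section \<open>Independent copies\<close>

lemma
  fixes g :: "'a \<Rightarrow> real"
  assumes Q: "prob_space Q" and i: "i \<in> J" and g: "g \<in> borel_measurable Q"
  shows integral_PiM_component: "(\<integral>\<omega>. g (\<omega> i) \<partial>PiM J (\<lambda>_. Q)) = integral\<^sup>L Q g"
    and integrable_PiM_component_iff: "integrable (PiM J (\<lambda>_. Q)) (\<lambda>\<omega>. g (\<omega> i)) \<longleftrightarrow> integrable Q g"
proof -
  have distr: "distr (PiM J (\<lambda>_. Q)) Q (\<lambda>\<omega>. \<omega> i) = Q"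
    by (rule distr_PiM_component[OF Q i])
  have meas: "(\<lambda>\<omega>. \<omega> i) \<in> PiM J (\<lambda>_. Q) \<rightarrow>\<^sub>M Q" using i by measurable
  show "(\<integral>\<omega>. g (\<omega> i) \<partial>PiM J (\<lambda>_. Q)) = integral\<^sup>L Q g"
    using integral_distr[OF meas g] distr by simp
  show "integrable (PiM J (\<lambda>_. Q)) (\<lambda>\<omega>. g (\<omega> i)) \<longleftrightarrow> integrable Q g"
    using integrable_distr_eq[OF meas g] distr by simp
qed

lemma
  fixes g :: "'a \<Rightarrow> real"
  assumes Q: "prob_space Q" and J: "finite J" "i \<in> J" "l \<in> J" "i \<noteq> l" and g: "integrable Q g"
  shows integral_PiM_two_components: "(\<integral>\<omega>. g (\<omega> i) * g (\<omega> l) \<partial>PiM J (\<lambda>_. Q)) = (integral\<^sup>L Q g)\<^sup>2"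
    and integrable_PiM_two_components: "integrable (PiM J (\<lambda>_. Q)) (\<lambda>\<omega>. g (\<omega> i) * g (\<omega> l))"
proof -
  interpret product_prob_space "\<lambda>_. Q" J using Q by (intro product_prob_spaceI)
  define f where "f = (\<lambda>j. if j = i \<or> j = l then g else (\<lambda>_. 1::real))"
  have f: "\<And>j. j \<in> J \<Longrightarrow> integrable Q (f j)" using g by (auto simp: f_def)
  have prod_f: "(\<Prod>j\<in>J. f j (\<omega> j)) = g (\<omega> i) * g (\<omega> l)" for \<omega>
  proof -
    have "(\<Prod>j\<in>J. f j (\<omega> j)) = (\<Prod>j\<in>{i,l}. f j (\<omega> j))"
      using J by (intro prod.mono_neutral_right) (auto simp: f_def)
    then show ?thesis using J by (simp add: f_def)
  qed
  have "(\<integral>\<omega>. (\<Prod>j\<in>J. f j (\<omega> j)) \<partial>PiM J (\<lambda>_. Q)) = (\<Prod>j\<in>J. integral\<^sup>L Q (f j))"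
    by (rule product_integral_prod[OF J(1) f])
  also have "\<dots> = (\<Prod>j\<in>{i,l}. integral\<^sup>L Q (f j))"
    using J by (intro prod.mono_neutral_right) (auto simp: f_def prob_space.prob_space[OF Q])
  also have "\<dots> = (integral\<^sup>L Q g)\<^sup>2" using J by (simp add: f_def power2_eq_square)
  finally show "(\<integral>\<omega>. g (\<omega> i) * g (\<omega> l) \<partial>PiM J (\<lambda>_. Q)) = (integral\<^sup>L Q g)\<^sup>2"
    by (simp only: prod_f)
  show "integrable (PiM J (\<lambda>_. Q)) (\<lambda>\<omega>. g (\<omega> i) * g (\<omega> l))"
    using product_integrable_prod[of J f] J(1) f by (simp add: prod_f)
qed

lemma
  fixes g :: "'a \<Rightarrow> real"
  assumes Q: "prob_space Q" and J: "finite J"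
    and g: "integrable Q g" "integrable Q (\<lambda>p. (g p)\<^sup>2)" "integral\<^sup>L Q g = 0"
  shows integral_PiM_sum_centered_sq:
      "(\<integral>\<omega>. (\<Sum>l\<in>J. g (\<omega> l))\<^sup>2 \<partial>PiM J (\<lambda>_. Q)) = real (card J) * (\<integral>p. (g p)\<^sup>2 \<partial>Q)"
    and integrable_PiM_sum_centered_sq: "integrable (PiM J (\<lambda>_. Q)) (\<lambda>\<omega>. (\<Sum>l\<in>J. g (\<omega> l))\<^sup>2)"
proof -
  have meas: "(\<lambda>p. (g p)\<^sup>2) \<in> borel_measurable Q" using g by auto
  have sq: "(\<Sum>l\<in>J. g (\<omega> l))\<^sup>2 = (\<Sum>i\<in>J. \<Sum>l\<in>J. g (\<omega> i) * g (\<omega> l))" for \<omega>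
    by (simp add: power2_eq_square sum_product)
  have int: "integrable (PiM J (\<lambda>_. Q)) (\<lambda>\<omega>. g (\<omega> i) * g (\<omega> l))"
    and val: "(\<integral>\<omega>. g (\<omega> i) * g (\<omega> l) \<partial>PiM J (\<lambda>_. Q)) = (if i = l then \<integral>p. (g p)\<^sup>2 \<partial>Q else 0)"
    if "i \<in> J" "l \<in> J" for i l
    using integral_PiM_component[OF Q that(1) meas] integrable_PiM_component_iff[OF Q that(1) meas]
      integral_PiM_two_components[OF Q J that _ g(1)] integrable_PiM_two_components[OF Q J that _ g(1)] g
    by (auto simp: power2_eq_square)
  show "integrable (PiM J (\<lambda>_. Q)) (\<lambda>\<omega>. (\<Sum>l\<in>J. g (\<omega> l))\<^sup>2)"
    unfolding sq using int by (simp add: integrable_sum)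
  have "(\<integral>\<omega>. (\<Sum>l\<in>J. g (\<omega> l))\<^sup>2 \<partial>PiM J (\<lambda>_. Q))
      = (\<Sum>i\<in>J. \<Sum>l\<in>J. if i = l then \<integral>p. (g p)\<^sup>2 \<partial>Q else 0)"
    unfolding sq using int val by (simp add: Bochner_Integration.integral_sum integrable_sum)
  then show "(\<integral>\<omega>. (\<Sum>l\<in>J. g (\<omega> l))\<^sup>2 \<partial>PiM J (\<lambda>_. Q)) = real (card J) * (\<integral>p. (g p)\<^sup>2 \<partial>Q)"
    using J by simp
qed

lemma abs_power_le_one_plus_pow4:
  fixes a :: real
  assumes "k \<le> 4"
  shows "\<bar>a\<bar> ^ k \<le> 1 + a ^ 4"
proof (cases "\<bar>a\<bar> \<le> 1")
  case True
  then have "\<bar>a\<bar> ^ k \<le> 1" by (simp add: power_le_one)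
  then show ?thesis by (simp add: add_increasing2)
next
  case False
  then have "\<bar>a\<bar> ^ k \<le> \<bar>a\<bar> ^ 4" using assms by (intro power_increasing) auto
  then show ?thesis by (simp add: power_even_abs)
qed

lemma power4_add_le:
  fixes a b :: real
  shows "(a + b) ^ 4 \<le> 8 * (a ^ 4 + b ^ 4)"
proof -
  have "(a + b)\<^sup>2 \<le> 2 * (a\<^sup>2 + b\<^sup>2)"
    using zero_le_power2[of "a - b"] by (simp add: power2_eq_square algebra_simps)
  then have "(a + b) ^ 4 \<le> (2 * (a\<^sup>2 + b\<^sup>2))\<^sup>2"
    by (metis power_mono power_mult zero_le_power2 numeral_Bit0_eq_double mult_2_right)
  also have "\<dots> = 4 * (a\<^sup>2 + b\<^sup>2)\<^sup>2" by algebra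
  also have "(a\<^sup>2 + b\<^sup>2)\<^sup>2 \<le> 2 * (a ^ 4 + b ^ 4)"
    using zero_le_power2[of "a\<^sup>2 - b\<^sup>2"] by (simp add: power2_eq_square algebra_simps power4_eq_xxxx)
  finally show ?thesis by simp
qed

lemma mult_le_AM_GM:
  fixes x y t :: real
  assumes "t > 0"
  shows "x * y \<le> t / 2 * x\<^sup>2 + y\<^sup>2 / (2 * t)"
proof -
  have "0 \<le> (t * x - y)\<^sup>2 / (2 * t)" using assms by simp
  also have "\<dots> = t / 2 * x\<^sup>2 + y\<^sup>2 / (2 * t) - x * y"
    using assms by (simp add: power2_eq_square field_simps)
  finally show ?thesis by simp
qed

lemma max_zero_minus_sq_le:
  fixes a A :: real
  assumes "A \<ge> 0"
  shows "(max 0 a - A)\<^sup>2 \<le> (a - A)\<^sup>2"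
  using assms by (cases "a \<le> 0") (auto simp: max_def intro!: power_mono abs_le_square_iff[THEN iffD1])

section \<open>The shrinkage rule\<close>

definition oracle_risk :: "real \<Rightarrow> real \<Rightarrow> real" where
  "oracle_risk s2 A = s2 * A / (s2 + A)"

lemma oracle_risk_nonneg: "s2 > 0 \<Longrightarrow> A \<ge> 0 \<Longrightarrow> oracle_risk s2 A \<ge> 0"
  by (simp add: oracle_risk_def)

lemma oracle_risk_le: "s2 > 0 \<Longrightarrow> A \<ge> 0 \<Longrightarrow> oracle_risk s2 A \<le> s2"
  by (simp add: oracle_risk_def divide_le_eq field_simps)

lemma oracle_risk_eq_bias_variance:
  assumes "s2 + A \<noteq> 0"
  shows "(A / (s2 + A))\<^sup>2 * s2 + (s2 / (s2 + A))\<^sup>2 * A = oracle_risk s2 A"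
proof -
  have "(A / (s2 + A))\<^sup>2 * s2 + (s2 / (s2 + A))\<^sup>2 * A = s2 * A * (s2 + A) / (s2 + A)\<^sup>2"
    by (simp add: power_divide add_divide_distrib power2_eq_square algebra_simps)
  also have "\<dots> = oracle_risk s2 A"
    using assms by (simp add: oracle_risk_def power2_eq_square)
  finally show ?thesis .
qed

lemma convex_on_neg_oracle_risk:
  assumes "s2 > 0"
  shows "convex_on {-s2<..} (\<lambda>A. - oracle_risk s2 A)"
proof (rule convex_on_realI)
  show "((\<lambda>A. - oracle_risk s2 A) has_real_derivative - (s2 / (s2 + A))\<^sup>2) (at A)"
    if "A \<in> {-s2<..}" for A
  proof -
    have "s2 + A \<noteq> 0" using that by auto
    then show ?thesis
      unfolding oracle_risk_def
      by (auto intro!: derivative_eq_intros simp: power2_eq_square field_simps)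
  qed
  show "- (s2 / (s2 + u))\<^sup>2 \<le> - (s2 / (s2 + v))\<^sup>2"
    if "u \<in> {-s2<..}" "v \<in> {-s2<..}" "u \<le> v" for u v
  proof -
    have "s2 / (s2 + v) \<le> s2 / (s2 + u)"
      using that assms by (intro divide_left_mono) auto
    moreover have "0 \<le> s2 / (s2 + v)" using that assms by auto
    ultimately show ?thesis by (simp add: power_mono)
  qed
qed auto

lemma integrable_oracle_risk:
  assumes N: "prob_space N" and s2: "s2 > 0"
    and f: "f \<in> borel_measurable N" "AE x in N. f x \<ge> 0"
  shows "integrable N (\<lambda>x. oracle_risk s2 (f x))"
proof -
  interpret prob_space N by (rule N)
  show ?thesis
  proof (rule integrable_const_bound[where B = s2])
    show "AE x in N. norm (oracle_risk s2 (f x)) \<le> s2"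
      using f(2) by eventually_elim (use s2 oracle_risk_nonneg oracle_risk_le in auto)
    show "(\<lambda>x. oracle_risk s2 (f x)) \<in> borel_measurable N"
      using f(1) unfolding oracle_risk_def by measurable
  qed
qed

lemma integral_oracle_risk_le:
  assumes N: "prob_space N" and s2: "s2 > 0"
    and f: "integrable N f" "AE x in N. f x \<ge> 0"
  shows "(\<integral>x. oracle_risk s2 (f x) \<partial>N) \<le> oracle_risk s2 (\<integral>x. f x \<partial>N)"
proof -
  interpret prob_space N by (rule N)
  have "integrable N (\<lambda>x. - oracle_risk s2 (f x))"
    using integrable_oracle_risk[OF N s2 borel_measurable_integrable[OF f(1)] f(2)] by simp
  moreover have "AE x in N. f x \<in> {-s2<..}" using f(2) by (rule eventually_mono) (use s2 in auto)
  ultimately have "- oracle_risk s2 (\<integral>x. f x \<partial>N) \<le> (\<integral>x. - oracle_risk s2 (f x) \<partial>N)"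
    by (intro jensens_inequality[OF f(1), where I = "{-s2<..}" and a = "-s2"]
        convex_on_neg_oracle_risk[OF s2]) auto
  then show ?thesis by simp
qed

lemma tstar_eq_shrink:
  assumes "s2 > 0" "B \<ge> 0"
  shows "tstar s2 m B x z = z - s2 / (s2 + B) * (z - m x)"
proof -
  have "s2 + B \<noteq> 0" using assms by auto
  have "tstar s2 m B x z = (B * z + s2 * m x) / (s2 + B)"
    unfolding tstar_def by (simp add: add_divide_distrib)
  also have "\<dots> = z - s2 / (s2 + B) * (z - m x)"
    using \<open>s2 + B \<noteq> 0\<close> by (simp add: field_simps)
  finally show ?thesis .
qed

lemma abs_shrink_weight_diff_le:
  fixes s2 A B :: real
  assumes s2: "s2 > 0" and A: "A \<ge> 0" and B: "B \<ge> 0"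
  shows "\<bar>s2 / (s2 + B) - s2 / (s2 + A)\<bar> \<le> 1"
    and "\<bar>s2 / (s2 + B) - s2 / (s2 + A)\<bar> \<le> \<bar>B - A\<bar> / s2"
proof -
  have "0 \<le> s2 / (s2 + a)" "s2 / (s2 + a) \<le> 1" if "a \<ge> 0" for a
    using that s2 by auto
  then show "\<bar>s2 / (s2 + B) - s2 / (s2 + A)\<bar> \<le> 1"
    using A B by (smt (verit))
  have "\<bar>s2 / (s2 + B) - s2 / (s2 + A)\<bar> = s2 * \<bar>B - A\<bar> / ((s2 + B) * (s2 + A))"
  proof -
    have "s2 / (s2 + B) - s2 / (s2 + A) = s2 * (A - B) / ((s2 + B) * (s2 + A))"
      using assms by (simp add: field_simps)
    then show ?thesis
      using assms by (simp add: abs_mult abs_divide abs_minus_commute)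
  qed
  also have "\<dots> \<le> s2 * \<bar>B - A\<bar> / (s2 * s2)"
    using assms by (intro divide_left_mono mult_mono) auto
  also have "\<dots> = \<bar>B - A\<bar> / s2" using s2 by simp
  finally show "\<bar>s2 / (s2 + B) - s2 / (s2 + A)\<bar> \<le> \<bar>B - A\<bar> / s2" .
qed

lemma sq_add_mult_le:
  fixes e d u :: real
  assumes "\<bar>d\<bar> \<le> 1"
  shows "(e + d * u)\<^sup>2 \<le> e\<^sup>2 + \<bar>d\<bar> * (2 * \<bar>e\<bar> * \<bar>u\<bar> + u\<^sup>2)"
proof -
  have "2 * e * d * u \<le> \<bar>d\<bar> * (2 * \<bar>e\<bar> * \<bar>u\<bar>)"
    using abs_ge_self[of "2 * e * d * u"] by (simp add: abs_mult ac_simps)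
  moreover have "d\<^sup>2 * u\<^sup>2 \<le> \<bar>d\<bar> * u\<^sup>2"
  proof (rule mult_right_mono)
    show "d\<^sup>2 \<le> \<bar>d\<bar>"
      using mult_left_le_one_le[of "\<bar>d\<bar>" "\<bar>d\<bar>"] assms by (simp add: power2_eq_square)
  qed simp
  moreover have "(e + d * u)\<^sup>2 = e\<^sup>2 + 2 * e * d * u + d\<^sup>2 * u\<^sup>2"
    by (simp add: power2_eq_square algebra_simps)
  ultimately show ?thesis by (simp add: distrib_left)
qed

lemma tstar_sq_error_perturb_le:
  fixes s2 A B t \<mu> z :: real and m :: "'x \<Rightarrow> real" and x :: 'x
  assumes s2: "s2 > 0" and A: "A \<ge> 0" and B: "B \<ge> 0" and t: "t > 0"
  defines "e \<equiv> \<mu> - tstar s2 m A x z"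
  shows "(\<mu> - tstar s2 m B x z)\<^sup>2
     \<le> e\<^sup>2 + t / 2 * (B - A)\<^sup>2 + (2 * \<bar>e\<bar> * \<bar>z - m x\<bar> + (z - m x)\<^sup>2)\<^sup>2 / (2 * t * s2\<^sup>2)"
proof -
  define d where "d = s2 / (s2 + B) - s2 / (s2 + A)"
  define P where "P = 2 * \<bar>e\<bar> * \<bar>z - m x\<bar> + (z - m x)\<^sup>2"
  have "\<mu> - tstar s2 m B x z = e + d * (z - m x)"
    unfolding e_def d_def tstar_eq_shrink[OF s2 A] tstar_eq_shrink[OF s2 B] by (simp add: algebra_simps)
  moreover have "(e + d * (z - m x))\<^sup>2 \<le> e\<^sup>2 + \<bar>d\<bar> * P"
    unfolding P_def d_def by (rule sq_add_mult_le[OF abs_shrink_weight_diff_le(1)[OF s2 A B]])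
  ultimately have "(\<mu> - tstar s2 m B x z)\<^sup>2 \<le> e\<^sup>2 + \<bar>d\<bar> * P" by simp
  also have "\<bar>d\<bar> * P \<le> \<bar>B - A\<bar> / s2 * P"
    using abs_shrink_weight_diff_le(2)[OF s2 A B] unfolding d_def P_def
    by (intro mult_right_mono) auto
  also have "\<dots> = \<bar>B - A\<bar> * (P / s2)" by simp
  also have "\<dots> \<le> t / 2 * \<bar>B - A\<bar>\<^sup>2 + (P / s2)\<^sup>2 / (2 * t)"
    by (rule mult_le_AM_GM[OF t])
  also have "\<dots> = t / 2 * (B - A)\<^sup>2 + P\<^sup>2 / (2 * t * s2\<^sup>2)"
    by (simp add: power_divide ac_simps)
  finally show ?thesis by (simp add: P_def add.assoc)
qed

section \<open>The data model\<close>

locale ebcf_model =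
  fixes SX :: "'x measure"
    and D :: "('x \<times> real \<times> real) measure"
    and s2 \<Gamma> M :: real
    and F :: "('x \<times> real \<times> real) measure"
  assumes F_def: "F = vimage_algebra (space D) (\<lambda>p. (fst p, fst (snd p))) (SX \<Otimes>\<^sub>M borel)"
    and D_prob: "prob_space D"
    and D_sets: "sets D = sets (SX \<Otimes>\<^sub>M borel \<Otimes>\<^sub>M borel)"
    and s2_pos: "s2 > 0"
    and cond_mean: "AE p in D. real_cond_exp D F (\<lambda>p. snd (snd p)) p = fst (snd p)"
    and cond_var: "AE p in D. real_cond_exp D F
                      (\<lambda>p. (snd (snd p) - real_cond_exp D F (\<lambda>q. snd (snd q)) p)\<^sup>2) p = s2"
    and fourth_moment: "AE p in D. nn_cond_exp D F (\<lambda>p. ennreal ((snd (snd p)) ^ 4)) p \<le> ennreal (\<Gamma> ^ 4)"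
    and mu_bounded: "AE p in D. \<bar>fst (snd p)\<bar> \<le> M"
begin

interpretation D: prob_space D by (rule D_prob)

abbreviation mu :: "'x \<times> real \<times> real \<Rightarrow> real" where "mu p \<equiv> fst (snd p)"
abbreviation z :: "'x \<times> real \<times> real \<Rightarrow> real" where "z p \<equiv> snd (snd p)"

lemma measurable_D_eq: "measurable D N = measurable (SX \<Otimes>\<^sub>M borel \<Otimes>\<^sub>M borel) N"
  by (rule measurable_cong_sets[OF D_sets refl])

lemma measurable_covariate[measurable]: "fst \<in> D \<rightarrow>\<^sub>M SX"
  unfolding measurable_D_eq by measurable

lemma borel_measurable_mu[measurable]: "mu \<in> borel_measurable D"
  unfolding measurable_D_eq by measurable

lemma borel_measurable_z[measurable]: "z \<in> borel_measurable D"
  unfolding measurable_D_eq by measurable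

lemma measurable_obs[measurable]: "obs \<in> D \<rightarrow>\<^sub>M SX \<Otimes>\<^sub>M borel"
  unfolding measurable_D_eq obs_def by measurable

lemma covariate_in_space: "p \<in> space D \<Longrightarrow> fst p \<in> space SX"
  using measurable_covariate by (auto simp: measurable_def)

lemma measurable_covariate_mu: "(\<lambda>p. (fst p, mu p)) \<in> D \<rightarrow>\<^sub>M SX \<Otimes>\<^sub>M borel"
  by measurable

lemma sigma_finite_subalgebra_F: "sigma_finite_subalgebra D F"
proof -
  have "subalgebra D F"
    unfolding subalgebra_def F_def
    using measurable_covariate_mu by (subst sets_vimage_algebra2) (auto simp: measurable_def)
  then show ?thesis
    by (intro finite_measure_subalgebra_is_sigma_finite)
      (simp add: finite_measure_subalgebra_def finite_measure_subalgebra_axioms_def D.finite_measure_axioms)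
qed

interpretation F: sigma_finite_subalgebra D F by (rule sigma_finite_subalgebra_F)

lemma borel_measurable_F_comp:
  assumes "G \<in> borel_measurable (SX \<Otimes>\<^sub>M borel)"
  shows "(\<lambda>p. G (fst p, mu p)) \<in> borel_measurable F"
proof -
  have "(\<lambda>p. (fst p, mu p)) \<in> F \<rightarrow>\<^sub>M SX \<Otimes>\<^sub>M borel"
    unfolding F_def using measurable_covariate_mu
    by (intro measurable_vimage_algebra1) (auto simp: measurable_def)
  from measurable_comp[OF this assms] show ?thesis by (simp add: comp_def)
qed

lemma M_nonneg: "M \<ge> 0"
proof -
  have "AE p in D. 0 \<le> M" using mu_bounded by eventually_elim auto
  then show ?thesis by simp
qed

lemma integrable_z_pow4: "integrable D (\<lambda>p. z p ^ 4)"
proof -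
  have "(\<integral>\<^sup>+ p. ennreal (z p ^ 4) \<partial>D) = (\<integral>\<^sup>+ p. 1 * nn_cond_exp D F (\<lambda>p. ennreal (z p ^ 4)) p \<partial>D)"
    using F.nn_cond_exp_intg[of "\<lambda>_. 1" "\<lambda>p. ennreal (z p ^ 4)"] by simp
  also have "\<dots> \<le> (\<integral>\<^sup>+ p. ennreal (\<Gamma> ^ 4) \<partial>D)"
    using fourth_moment by (intro nn_integral_mono_AE) auto
  also have "\<dots> < \<infinity>" by (simp add: D.emeasure_space_1)
  finally show ?thesis by (intro integrableI_nonneg) auto
qed

text \<open>For |m| \<le> M, the envelope M + |Z| dominates |Z - \<mu>| and |Z - m X|, so its fourth moment
  bounds every fourth-order quantity below.\<close>
definition envelope_moment :: real where
  "envelope_moment = (\<integral>p. (M + \<bar>z p\<bar>) ^ 4 \<partial>D)"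

lemma integrable_envelope: "integrable D (\<lambda>p. (M + \<bar>z p\<bar>) ^ 4)"
proof (rule Bochner_Integration.integrable_bound)
  show "integrable D (\<lambda>p. 8 * (M ^ 4 + z p ^ 4))" using integrable_z_pow4 by auto
  show "AE p in D. norm ((M + \<bar>z p\<bar>) ^ 4) \<le> norm (8 * (M ^ 4 + z p ^ 4))"
    using power4_add_le[of M "\<bar>z p\<bar>" for p] by (auto simp: power_even_abs)
qed simp

lemma envelope_moment_nonneg: "envelope_moment \<ge> 0"
  unfolding envelope_moment_def by (rule integral_nonneg_AE) auto

lemma integrable_by_envelope:
  assumes "g \<in> borel_measurable D" "AE p in D. \<bar>g p\<bar> \<le> c + d * (M + \<bar>z p\<bar>) ^ 4"
  shows "integrable D g"
proof (rule Bochner_Integration.integrable_bound[OF _ assms(1)])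
  show "integrable D (\<lambda>p. c + d * (M + \<bar>z p\<bar>) ^ 4)" using integrable_envelope by auto
  show "AE p in D. norm (g p) \<le> norm (c + d * (M + \<bar>z p\<bar>) ^ 4)"
    using assms(2) by eventually_elim auto
qed

lemma AE_abs_z_minus_mu_le: "AE p in D. \<bar>z p - mu p\<bar> \<le> M + \<bar>z p\<bar>"
  using mu_bounded by eventually_elim auto

lemma integrable_noise_sq: "integrable D (\<lambda>p. (z p - mu p)\<^sup>2)"
proof (rule integrable_by_envelope[where c = 1 and d = 1])
  show "AE p in D. \<bar>(z p - mu p)\<^sup>2\<bar> \<le> 1 + 1 * (M + \<bar>z p\<bar>) ^ 4"
    using AE_abs_z_minus_mu_le
  proof eventually_elim
    case (elim p)
    have "\<bar>z p - mu p\<bar>\<^sup>2 \<le> \<bar>M + \<bar>z p\<bar>\<bar>\<^sup>2"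
      using elim by (intro power_mono) auto
    also have "\<dots> \<le> 1 + (M + \<bar>z p\<bar>) ^ 4" by (rule abs_power_le_one_plus_pow4) simp
    finally show ?case by simp
  qed
qed simp

lemma integral_noise_sq: "(\<integral>p. (z p - mu p)\<^sup>2 \<partial>D) = s2"
proof -
  have eq: "AE p in D. (z p - mu p)\<^sup>2 = (z p - real_cond_exp D F z p)\<^sup>2"
    using cond_mean by eventually_elim simp
  have int: "integrable D (\<lambda>p. (z p - real_cond_exp D F z p)\<^sup>2)"
    using integrable_noise_sq by (rule integrable_cong_AE_imp) (use eq in auto)
  have "(\<integral>p. (z p - mu p)\<^sup>2 \<partial>D) = (\<integral>p. (z p - real_cond_exp D F z p)\<^sup>2 \<partial>D)"
    by (rule integral_cong_AE) (use eq in auto)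
  also have "\<dots> = (\<integral>p. real_cond_exp D F (\<lambda>p. (z p - real_cond_exp D F z p)\<^sup>2) p \<partial>D)"
    using F.real_cond_exp_int(2)[OF int] by simp
  also have "\<dots> = (\<integral>p. s2 \<partial>D)"
    by (rule integral_cong_AE) (use cond_var in auto)
  finally show ?thesis by (simp add: D.prob_space)
qed

lemma
  assumes G: "G \<in> borel_measurable (SX \<Otimes>\<^sub>M borel)" and B: "AE p in D. \<bar>G (fst p, mu p)\<bar> \<le> B"
  shows integral_noise_orthogonal: "(\<integral>p. G (fst p, mu p) * (z p - mu p) \<partial>D) = 0"
    and integrable_noise_orthogonal: "integrable D (\<lambda>p. G (fst p, mu p) * (z p - mu p))"
proof -
  have [measurable]: "(\<lambda>p. G (fst p, mu p)) \<in> borel_measurable D"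
    using G by measurable
  have int_z: "integrable D (\<lambda>p. G (fst p, mu p) * z p)"
  proof (rule integrable_by_envelope[where c = B and d = B])
    show "AE p in D. \<bar>G (fst p, mu p) * z p\<bar> \<le> B + B * (M + \<bar>z p\<bar>) ^ 4"
      using B
    proof eventually_elim
      case (elim p)
      have "\<bar>G (fst p, mu p) * z p\<bar> \<le> B * \<bar>M + \<bar>z p\<bar>\<bar> ^ 1"
        using elim M_nonneg by (auto simp: abs_mult intro!: mult_mono)
      also have "\<dots> \<le> B * (1 + (M + \<bar>z p\<bar>) ^ 4)"
        using elim by (intro mult_left_mono abs_power_le_one_plus_pow4) auto
      finally show ?case by (simp add: algebra_simps)
    qed
  qed simp
  have int_mu: "integrable D (\<lambda>p. G (fst p, mu p) * mu p)"
  proof (rule integrable_by_envelope[where c = "B * M" and d = 0])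
    show "AE p in D. \<bar>G (fst p, mu p) * mu p\<bar> \<le> B * M + 0 * (M + \<bar>z p\<bar>) ^ 4"
      using B mu_bounded by eventually_elim (simp add: abs_mult mult_mono')
  qed simp
  have "(\<integral>p. G (fst p, mu p) * z p \<partial>D) = (\<integral>p. G (fst p, mu p) * real_cond_exp D F z p \<partial>D)"
    by (rule F.real_cond_exp_intg(2)[OF int_z borel_measurable_F_comp[OF G], symmetric]) simp
  also have "\<dots> = (\<integral>p. G (fst p, mu p) * mu p \<partial>D)"
    by (rule integral_cong_AE) (use cond_mean in auto)
  finally show "(\<integral>p. G (fst p, mu p) * (z p - mu p) \<partial>D) = 0"
    using int_z int_mu by (simp add: right_diff_distrib)
  show "integrable D (\<lambda>p. G (fst p, mu p) * (z p - mu p))"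
    using int_z int_mu by (simp add: right_diff_distrib)
qed

definition mse :: "('x \<Rightarrow> real) \<Rightarrow> real" where
  "mse m = (\<integral>p. (m (fst p) - mu p)\<^sup>2 \<partial>D)"

definition centered_residual :: "('x \<Rightarrow> real) \<Rightarrow> 'x \<times> real \<times> real \<Rightarrow> real" where
  "centered_residual m p = (m (fst p) - z p)\<^sup>2 - (mse m + s2)"

definition perturbation_term :: "('x \<Rightarrow> real) \<Rightarrow> 'x \<times> real \<times> real \<Rightarrow> real" where
  "perturbation_term m p =
     (2 * \<bar>mu p - tstar s2 m (mse m) (fst p) (z p)\<bar> * \<bar>z p - m (fst p)\<bar> + (z p - m (fst p))\<^sup>2)\<^sup>2"

definition shrinkage_loss :: "('x \<Rightarrow> real) \<Rightarrow> nat set \<Rightarrow> (nat \<Rightarrow> 'x \<times> real \<times> real) \<Rightarrow> nat \<Rightarrow> real" where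
  "shrinkage_loss m J y i = (mu (y i) - tstar s2 m (Ahat s2 m J y) (fst (y i)) (z (y i)))\<^sup>2"

lemma mse_nonneg: "mse m \<ge> 0"
  unfolding mse_def by simp

lemma Ahat_minus_mse_sq_le:
  assumes "finite J" "J \<noteq> {}"
  shows "(Ahat s2 m J y - mse m)\<^sup>2 \<le> ((\<Sum>l\<in>J. centered_residual m (y l)) / card J)\<^sup>2"
proof -
  have "(\<Sum>l\<in>J. (m (fst (y l)) - z (y l))\<^sup>2) / card J - s2 - mse m
      = (\<Sum>l\<in>J. centered_residual m (y l)) / card J"
    using assms by (simp add: centered_residual_def sum_subtractf field_simps)
  then show ?thesis
    using max_zero_minus_sq_le[OF mse_nonneg] unfolding Ahat_def by metis
qed

lemma tstar_Ahat_error_le: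
  assumes J: "finite J" "J \<noteq> {}" and t: "t > 0"
  shows "(mu p - tstar s2 m (Ahat s2 m J y) (fst p) (z p))\<^sup>2
    \<le> (mu p - tstar s2 m (mse m) (fst p) (z p))\<^sup>2
      + t / 2 * ((\<Sum>l\<in>J. centered_residual m (y l)) / card J)\<^sup>2
      + perturbation_term m p / (2 * t * s2\<^sup>2)"
proof -
  have "Ahat s2 m J y \<ge> 0" by (simp add: Ahat_def)
  then have "(mu p - tstar s2 m (Ahat s2 m J y) (fst p) (z p))\<^sup>2
    \<le> (mu p - tstar s2 m (mse m) (fst p) (z p))\<^sup>2 + t / 2 * (Ahat s2 m J y - mse m)\<^sup>2
      + perturbation_term m p / (2 * t * s2\<^sup>2)"
    unfolding perturbation_term_def by (rule tstar_sq_error_perturb_le[OF s2_pos mse_nonneg _ t])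
  also have "t / 2 * (Ahat s2 m J y - mse m)\<^sup>2
      \<le> t / 2 * ((\<Sum>l\<in>J. centered_residual m (y l)) / card J)\<^sup>2"
    using t Ahat_minus_mse_sq_le[OF J] by (intro mult_left_mono) auto
  finally show ?thesis by simp
qed

lemma shrinkage_loss_merge:
  assumes "J1 \<inter> J2 = {}" "i \<in> J2"
  shows "shrinkage_loss m J2 (merge J1 J2 (x, y)) i = shrinkage_loss m J2 y i"
proof -
  have "\<And>l. l \<in> J2 \<Longrightarrow> merge J1 J2 (x, y) l = y l" using assms(1) by (auto simp: merge_def)
  then show ?thesis using assms(2) by (simp add: shrinkage_loss_def Ahat_def)
qed

lemma sq_error_ebcf_eq:
  "(mu (\<omega> i) - ebcf s2 fit I1 I2 \<omega> i)\<^sup>2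
    = (if i \<in> I2 then shrinkage_loss (fitted_on fit I1 \<omega>) I2 \<omega> i
       else shrinkage_loss (fitted_on fit I2 \<omega>) I1 \<omega> i)"
  by (simp add: ebcf_def shrinkage_loss_def)

context
  fixes m :: "'x \<Rightarrow> real"
  assumes m_meas[measurable]: "m \<in> borel_measurable SX"
    and m_bounded: "\<forall>x\<in>space SX. \<bar>m x\<bar> \<le> M"
begin

lemma AE_error_bounds:
  "AE p in D. \<bar>z p - m (fst p)\<bar> \<le> M + \<bar>z p\<bar> \<and> \<bar>mu p - z p\<bar> \<le> M + \<bar>z p\<bar>
     \<and> \<bar>m (fst p) - mu p\<bar> \<le> 2 * M"
  using mu_bounded AE_space
proof eventually_elim
  case (elim p)
  then show ?case using m_bounded covariate_in_space[of p] by fastforce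
qed

lemma integrable_fit_error_sq: "integrable D (\<lambda>p. (m (fst p) - mu p)\<^sup>2)"
  and fit_error_sq_le: "AE p in D. (m (fst p) - mu p)\<^sup>2 \<le> 4 * M\<^sup>2"
proof -
  show bound: "AE p in D. (m (fst p) - mu p)\<^sup>2 \<le> 4 * M\<^sup>2"
    using AE_error_bounds
  proof eventually_elim
    case (elim p)
    then have "\<bar>m (fst p) - mu p\<bar>\<^sup>2 \<le> (2 * M)\<^sup>2" by (intro power_mono) auto
    then show ?case by (simp add: power_mult_distrib)
  qed
  show "integrable D (\<lambda>p. (m (fst p) - mu p)\<^sup>2)"
    by (rule integrable_by_envelope[where c = "4 * M\<^sup>2" and d = 0]) (use bound in auto)
qed

lemma mse_le: "mse m \<le> 4 * M\<^sup>2"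
proof -
  have "mse m \<le> (\<integral>p. 4 * M\<^sup>2 \<partial>D)"
    unfolding mse_def by (rule integral_mono_AE[OF integrable_fit_error_sq _ fit_error_sq_le]) simp
  then show ?thesis by (simp add: D.prob_space)
qed

lemma integral_fit_error_noise: "(\<integral>p. (m (fst p) - mu p) * (z p - mu p) \<partial>D) = 0"
  and integrable_fit_error_noise: "integrable D (\<lambda>p. (m (fst p) - mu p) * (z p - mu p))"
proof -
  have G: "(\<lambda>(x, r). m x - r) \<in> borel_measurable (SX \<Otimes>\<^sub>M borel)" by measurable
  have B: "AE p in D. \<bar>(\<lambda>(x, r). m x - r) (fst p, mu p)\<bar> \<le> 2 * M"
    using AE_error_bounds by eventually_elim auto
  show "(\<integral>p. (m (fst p) - mu p) * (z p - mu p) \<partial>D) = 0"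
    using integral_noise_orthogonal[OF G B] by simp
  show "integrable D (\<lambda>p. (m (fst p) - mu p) * (z p - mu p))"
    using integrable_noise_orthogonal[OF G B] by simp
qed

lemma integrable_residual_sq: "integrable D (\<lambda>p. (m (fst p) - z p)\<^sup>2)"
  and integral_residual_sq: "(\<integral>p. (m (fst p) - z p)\<^sup>2 \<partial>D) = mse m + s2"
proof -
  have eq: "(\<lambda>p. (m (fst p) - z p)\<^sup>2) = (\<lambda>p. (m (fst p) - mu p)\<^sup>2
      - 2 * ((m (fst p) - mu p) * (z p - mu p)) + (z p - mu p)\<^sup>2)"
    by (rule ext) (simp add: power2_eq_square algebra_simps)
  show "integrable D (\<lambda>p. (m (fst p) - z p)\<^sup>2)"
    unfolding eq using integrable_fit_error_sq integrable_fit_error_noise integrable_noise_sq by auto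
  show "(\<integral>p. (m (fst p) - z p)\<^sup>2 \<partial>D) = mse m + s2"
    unfolding eq mse_def
    using integrable_fit_error_sq integrable_fit_error_noise integrable_noise_sq
      integral_fit_error_noise integral_noise_sq by simp
qed

lemma integrable_residual_pow4: "integrable D (\<lambda>p. ((m (fst p) - z p)\<^sup>2)\<^sup>2)"
  and integral_residual_pow4_le: "(\<integral>p. ((m (fst p) - z p)\<^sup>2)\<^sup>2 \<partial>D) \<le> envelope_moment"
proof -
  have bound: "AE p in D. \<bar>((m (fst p) - z p)\<^sup>2)\<^sup>2\<bar> \<le> (M + \<bar>z p\<bar>) ^ 4"
    using AE_error_bounds
  proof eventually_elim
    case (elim p)
    then have "\<bar>m (fst p) - z p\<bar> ^ 4 \<le> (M + \<bar>z p\<bar>) ^ 4"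
      by (intro power_mono) (auto simp: abs_minus_commute)
    then show ?case by (simp add: power_abs flip: power_mult)
  qed
  show int: "integrable D (\<lambda>p. ((m (fst p) - z p)\<^sup>2)\<^sup>2)"
    by (rule integrable_by_envelope[where c = 0 and d = 1]) (use bound in auto)
  show "(\<integral>p. ((m (fst p) - z p)\<^sup>2)\<^sup>2 \<partial>D) \<le> envelope_moment"
    unfolding envelope_moment_def using int integrable_envelope bound
    by (intro integral_mono_AE) auto
qed

lemma integrable_tstar_oracle_error:
    "integrable D (\<lambda>p. (mu p - tstar s2 m (mse m) (fst p) (z p))\<^sup>2)"
  and integral_tstar_oracle_error:
    "(\<integral>p. (mu p - tstar s2 m (mse m) (fst p) (z p))\<^sup>2 \<partial>D) = oracle_risk s2 (mse m)"
proof -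
  define w where "w = s2 / (s2 + mse m)"
  have "1 - w = mse m / (s2 + mse m)"
    using s2_pos mse_nonneg[of m] by (simp add: w_def field_simps)
  have eq: "(\<lambda>p. (mu p - tstar s2 m (mse m) (fst p) (z p))\<^sup>2) = (\<lambda>p. (1 - w)\<^sup>2 * (z p - mu p)\<^sup>2
      + w\<^sup>2 * (m (fst p) - mu p)\<^sup>2 + (2 * w * (1 - w)) * ((m (fst p) - mu p) * (z p - mu p)))"
    by (rule ext)
      (simp add: tstar_eq_shrink[OF s2_pos mse_nonneg] w_def[symmetric] power2_eq_square algebra_simps)
  show "integrable D (\<lambda>p. (mu p - tstar s2 m (mse m) (fst p) (z p))\<^sup>2)"
    unfolding eq using integrable_fit_error_sq integrable_fit_error_noise integrable_noise_sq by auto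
  have "(\<integral>p. (mu p - tstar s2 m (mse m) (fst p) (z p))\<^sup>2 \<partial>D) = (1 - w)\<^sup>2 * s2 + w\<^sup>2 * mse m"
    unfolding eq
    using integrable_fit_error_sq integrable_fit_error_noise integrable_noise_sq
      integral_fit_error_noise integral_noise_sq by (simp add: mse_def[symmetric])
  also have "\<dots> = (mse m / (s2 + mse m))\<^sup>2 * s2 + (s2 / (s2 + mse m))\<^sup>2 * mse m"
    by (simp only: \<open>1 - w = _\<close>) (simp only: w_def)
  also have "\<dots> = oracle_risk s2 (mse m)"
    using s2_pos mse_nonneg[of m] by (intro oracle_risk_eq_bias_variance) auto
  finally show "(\<integral>p. (mu p - tstar s2 m (mse m) (fst p) (z p))\<^sup>2 \<partial>D) = oracle_risk s2 (mse m)" .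
qed

lemma perturbation_term_le:
  assumes "\<bar>z p - m (fst p)\<bar> \<le> M + \<bar>z p\<bar>" "\<bar>mu p - z p\<bar> \<le> M + \<bar>z p\<bar>"
  shows "perturbation_term m p \<le> 25 * (M + \<bar>z p\<bar>) ^ 4"
proof -
  define K where "K = M + \<bar>z p\<bar>"
  define w where "w = s2 / (s2 + mse m)"
  have w: "0 \<le> w" "w \<le> 1" using s2_pos mse_nonneg[of m] by (auto simp: w_def)
  have K: "\<bar>z p - m (fst p)\<bar> \<le> K" "\<bar>mu p - z p\<bar> \<le> K" "0 \<le> K"
    using assms by (auto simp: K_def)
  have "\<bar>mu p - tstar s2 m (mse m) (fst p) (z p)\<bar> = \<bar>(mu p - z p) + w * (z p - m (fst p))\<bar>"
    by (simp add: tstar_eq_shrink[OF s2_pos mse_nonneg] w_def)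
  also have "\<dots> \<le> \<bar>mu p - z p\<bar> + w * \<bar>z p - m (fst p)\<bar>"
    using w abs_triangle_ineq[of "mu p - z p" "w * (z p - m (fst p))"] by (simp add: abs_mult)
  also have "\<dots> \<le> K + 1 * K"
    using K w by (intro add_mono mult_mono) auto
  finally have "\<bar>mu p - tstar s2 m (mse m) (fst p) (z p)\<bar> \<le> 2 * K" by simp
  then have "2 * \<bar>mu p - tstar s2 m (mse m) (fst p) (z p)\<bar> * \<bar>z p - m (fst p)\<bar> \<le> 2 * (2 * K) * K"
    using K by (intro mult_mono) auto
  moreover have "(z p - m (fst p))\<^sup>2 \<le> K\<^sup>2"
    using K abs_le_square_iff[of "z p - m (fst p)" K] by simp
  ultimately have "2 * \<bar>mu p - tstar s2 m (mse m) (fst p) (z p)\<bar> * \<bar>z p - m (fst p)\<bar>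
      + (z p - m (fst p))\<^sup>2 \<le> 5 * K\<^sup>2"
    by (simp add: power2_eq_square ac_simps)
  then have "perturbation_term m p \<le> (5 * K\<^sup>2)\<^sup>2"
    unfolding perturbation_term_def by (intro power_mono) auto
  then show ?thesis by (simp add: K_def power2_eq_square power4_eq_xxxx)
qed

lemma integrable_perturbation_term: "integrable D (perturbation_term m)"
  and integral_perturbation_term_le: "integral\<^sup>L D (perturbation_term m) \<le> 25 * envelope_moment"
proof -
  have bound: "AE p in D. \<bar>perturbation_term m p\<bar> \<le> 25 * (M + \<bar>z p\<bar>) ^ 4"
    using AE_error_bounds
  proof eventually_elim
    case (elim p)
    then have "perturbation_term m p \<le> 25 * (M + \<bar>z p\<bar>) ^ 4"
      by (intro perturbation_term_le) auto
    moreover have "0 \<le> perturbation_term m p" by (simp add: perturbation_term_def)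
    ultimately show ?case by (simp add: abs_of_nonneg)
  qed
  have [measurable]: "perturbation_term m \<in> borel_measurable D"
    unfolding perturbation_term_def tstar_def by measurable
  show int: "integrable D (perturbation_term m)"
    by (rule integrable_by_envelope[where c = 0 and d = 25]) (use bound in auto)
  have "integral\<^sup>L D (perturbation_term m) \<le> (\<integral>p. 25 * (M + \<bar>z p\<bar>) ^ 4 \<partial>D)"
    using int integrable_envelope bound by (intro integral_mono_AE) auto
  then show "integral\<^sup>L D (perturbation_term m) \<le> 25 * envelope_moment"
    by (simp add: envelope_moment_def)
qed

lemma integrable_centered_residual: "integrable D (centered_residual m)"
  and integral_centered_residual: "integral\<^sup>L D (centered_residual m) = 0"
  and integrable_centered_residual_sq: "integrable D (\<lambda>p. (centered_residual m p)\<^sup>2)"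
  and integral_centered_residual_sq_le: "(\<integral>p. (centered_residual m p)\<^sup>2 \<partial>D) \<le> envelope_moment"
proof -
  define c where "c = mse m + s2"
  have g: "centered_residual m = (\<lambda>p. (m (fst p) - z p)\<^sup>2 - c)"
    by (simp add: centered_residual_def c_def fun_eq_iff)
  show "integrable D (centered_residual m)"
    unfolding g using integrable_residual_sq by auto
  show "integral\<^sup>L D (centered_residual m) = 0"
    unfolding g using integrable_residual_sq integral_residual_sq by (simp add: c_def D.prob_space)
  have eq: "(\<lambda>p. (centered_residual m p)\<^sup>2)
      = (\<lambda>p. ((m (fst p) - z p)\<^sup>2)\<^sup>2 - 2 * c * (m (fst p) - z p)\<^sup>2 + c\<^sup>2)"
    unfolding g by (rule ext) (simp add: power2_eq_square algebra_simps)
  show "integrable D (\<lambda>p. (centered_residual m p)\<^sup>2)"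
    unfolding eq using integrable_residual_sq integrable_residual_pow4 by auto
  have "(\<integral>p. (centered_residual m p)\<^sup>2 \<partial>D) = (\<integral>p. ((m (fst p) - z p)\<^sup>2)\<^sup>2 \<partial>D) - c\<^sup>2"
    unfolding eq using integrable_residual_sq integrable_residual_pow4 integral_residual_sq
    by (simp add: D.prob_space c_def power2_eq_square)
  then show "(\<integral>p. (centered_residual m p)\<^sup>2 \<partial>D) \<le> envelope_moment"
    using integral_residual_pow4_le zero_le_power2[of c] by linarith
qed

lemma
  assumes J: "finite J" "J \<noteq> {}"
  shows integrable_mean_centered_residual_sq:
      "integrable (PiM J (\<lambda>_. D)) (\<lambda>y. ((\<Sum>l\<in>J. centered_residual m (y l)) / card J)\<^sup>2)"
    and integral_mean_centered_residual_sq_le: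
      "(\<integral>y. ((\<Sum>l\<in>J. centered_residual m (y l)) / card J)\<^sup>2 \<partial>PiM J (\<lambda>_. D)) \<le> envelope_moment / card J"
proof -
  have k: "real (card J) > 0" using J by auto
  note sum_sq = integrable_PiM_sum_centered_sq[OF D_prob J(1) integrable_centered_residual
        integrable_centered_residual_sq integral_centered_residual]
      integral_PiM_sum_centered_sq[OF D_prob J(1) integrable_centered_residual
        integrable_centered_residual_sq integral_centered_residual]
  show "integrable (PiM J (\<lambda>_. D)) (\<lambda>y. ((\<Sum>l\<in>J. centered_residual m (y l)) / card J)\<^sup>2)"
    using sum_sq by (simp add: power_divide)
  have "(\<integral>y. ((\<Sum>l\<in>J. centered_residual m (y l)) / card J)\<^sup>2 \<partial>PiM J (\<lambda>_. D))
      = (\<integral>p. (centered_residual m p)\<^sup>2 \<partial>D) / card J"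
    using sum_sq k by (simp add: power_divide power2_eq_square)
  also have "\<dots> \<le> envelope_moment / card J"
    using integral_centered_residual_sq_le k by (intro divide_right_mono) auto
  finally show "(\<integral>y. ((\<Sum>l\<in>J. centered_residual m (y l)) / card J)\<^sup>2 \<partial>PiM J (\<lambda>_. D))
      \<le> envelope_moment / card J" .
qed

lemma nn_integral_shrinkage_loss_le:
  assumes J: "finite J" "i \<in> J" and t: "t > 0"
  shows "(\<integral>\<^sup>+y. ennreal (shrinkage_loss m J y i) \<partial>PiM J (\<lambda>_. D))
    \<le> ennreal (oracle_risk s2 (mse m) + t / (2 * card J) * envelope_moment
                + 25 * envelope_moment / (2 * t * s2\<^sup>2))"
proof -
  let ?P = "PiM J (\<lambda>_. D)" and ?V = envelope_moment
  define e where "e = (\<lambda>p. (mu p - tstar s2 m (mse m) (fst p) (z p))\<^sup>2)"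
  define Q where "Q = (\<lambda>y. ((\<Sum>l\<in>J. centered_residual m (y l)) / card J)\<^sup>2)"
  define b where "b = (\<lambda>y. e (y i) + t / 2 * Q y + perturbation_term m (y i) / (2 * t * s2\<^sup>2))"
  have J_ne: "J \<noteq> {}" using J(2) by auto
  have e_meas[measurable]: "e \<in> borel_measurable D"
    unfolding e_def tstar_def by measurable
  have pt_meas[measurable]: "perturbation_term m \<in> borel_measurable D"
    unfolding perturbation_term_def tstar_def by measurable
  have e: "integrable ?P (\<lambda>y. e (y i))" "(\<integral>y. e (y i) \<partial>?P) = oracle_risk s2 (mse m)"
    using integrable_PiM_component_iff[OF D_prob J(2) e_meas] integral_PiM_component[OF D_prob J(2) e_meas]
      integrable_tstar_oracle_error integral_tstar_oracle_error
    unfolding e_def by simp_all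
  have pt: "integrable ?P (\<lambda>y. perturbation_term m (y i))"
    "(\<integral>y. perturbation_term m (y i) \<partial>?P) / (2 * t * s2\<^sup>2) \<le> 25 * ?V / (2 * t * s2\<^sup>2)"
    using integrable_PiM_component_iff[OF D_prob J(2) pt_meas] integral_PiM_component[OF D_prob J(2) pt_meas]
      integrable_perturbation_term integral_perturbation_term_le t s2_pos
    by (simp_all add: divide_right_mono)
  have "t / 2 * (\<integral>y. Q y \<partial>?P) \<le> t / 2 * (?V / card J)"
    using integral_mean_centered_residual_sq_le[OF J(1) J_ne] t unfolding Q_def
    by (intro mult_left_mono) auto
  then have Q: "integrable ?P Q" "t / 2 * (\<integral>y. Q y \<partial>?P) \<le> t / (2 * card J) * ?V"
    using integrable_mean_centered_residual_sq[OF J(1) J_ne] by (simp_all add: Q_def)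
  have "(\<integral>\<^sup>+y. ennreal (shrinkage_loss m J y i) \<partial>?P) \<le> (\<integral>\<^sup>+y. ennreal (b y) \<partial>?P)"
    using tstar_Ahat_error_le[OF J(1) J_ne t]
    by (intro nn_integral_mono ennreal_leI) (simp add: shrinkage_loss_def b_def e_def Q_def)
  also have "\<dots> = ennreal (\<integral>y. b y \<partial>?P)"
    unfolding b_def using e(1) Q(1) pt(1)
    by (intro nn_integral_eq_integral) (use t in \<open>auto simp: e_def Q_def perturbation_term_def\<close>)
  also have "(\<integral>y. b y \<partial>?P) = oracle_risk s2 (mse m) + t / 2 * (\<integral>y. Q y \<partial>?P)
      + (\<integral>y. perturbation_term m (y i) \<partial>?P) / (2 * t * s2\<^sup>2)"
    unfolding b_def using e Q(1) pt(1) by simp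
  also have "\<dots> \<le> ennreal (oracle_risk s2 (mse m) + t / (2 * card J) * ?V + 25 * ?V / (2 * t * s2\<^sup>2))"
    using Q(2) pt(2) by (intro ennreal_leI) linarith
  finally show ?thesis .
qed

end

end

section \<open>Cross-fitting\<close>

lemma sorted_list_of_set_nth_mem: "finite J \<Longrightarrow> j < card J \<Longrightarrow> sorted_list_of_set J ! j \<in> J"
  by (metis nth_mem length_sorted_list_of_set set_sorted_list_of_set)

lemma inj_on_nth_sorted_list_of_set: "finite J \<Longrightarrow> inj_on (\<lambda>j. sorted_list_of_set J ! j) {..<card J}"
  by (intro inj_on_nth) (auto simp: distinct_sorted_list_of_set)

definition subsample :: "nat set \<Rightarrow> (nat \<Rightarrow> 'x \<times> real \<times> real) \<Rightarrow> nat \<Rightarrow> 'x \<times> real" where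
  "subsample J \<omega> = restrict (\<lambda>j. obs (\<omega> (sorted_list_of_set J ! j))) {..<card J}"

lemma fitted_on_eq_subsample: "fitted_on fit J \<omega> = fit (card J) (subsample J \<omega>)"
  by (simp add: fitted_on_def subsample_def)

lemma subsample_merge:
  assumes "finite J1"
  shows "subsample J1 (merge J1 J2 (x, y)) = subsample J1 x"
  using sorted_list_of_set_nth_mem[OF assms] by (auto simp: subsample_def merge_def restrict_def)

locale ebcf_cross_fit = ebcf_model SX D s2 \<Gamma> M F
  for SX :: "'x measure" and D s2 \<Gamma> M F +
  fixes fit :: "nat \<Rightarrow> (nat \<Rightarrow> 'x \<times> real) \<Rightarrow> 'x \<Rightarrow> real"
    and S :: "('x \<times> real) measure"
  assumes S_def: "S = distr D (SX \<Otimes>\<^sub>M borel) obs"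
    and fit_meas: "\<And>m. (\<lambda>(d, x). fit m d x)
                      \<in> borel_measurable ((\<Pi>\<^sub>M j\<in>{..<m}. SX \<Otimes>\<^sub>M borel) \<Otimes>\<^sub>M SX)"
    and fit_bounded: "\<And>m. AE d in (\<Pi>\<^sub>M j\<in>{..<m}. S). \<forall>x\<in>space SX. \<bar>fit m d x\<bar> \<le> M"
begin

interpretation D: prob_space D by (rule D_prob)

lemma sets_S: "sets S = sets (SX \<Otimes>\<^sub>M borel)"
  by (simp add: S_def)

lemma prob_space_S: "prob_space S"
  unfolding S_def by (intro D.prob_space_distr measurable_obs)

lemma prob_space_PiM_S: "prob_space (PiM K (\<lambda>_. S))"
  by (intro prob_space_PiM prob_space_S)

lemma sets_PiM_S: "sets (PiM K (\<lambda>_. S)) = sets (PiM K (\<lambda>_. SX \<Otimes>\<^sub>M borel))"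
  by (intro sets_PiM_cong) (auto simp: sets_S)

lemma measurable_fit_comp:
  assumes "f \<in> N \<rightarrow>\<^sub>M PiM {..<k} (\<lambda>_. SX \<Otimes>\<^sub>M borel)" "g \<in> N \<rightarrow>\<^sub>M SX"
  shows "(\<lambda>\<omega>. fit k (f \<omega>) (g \<omega>)) \<in> borel_measurable N"
proof -
  have "(\<lambda>\<omega>. (f \<omega>, g \<omega>)) \<in> N \<rightarrow>\<^sub>M PiM {..<k} (\<lambda>_. SX \<Otimes>\<^sub>M borel) \<Otimes>\<^sub>M SX"
    using assms by measurable
  from measurable_comp[OF this fit_meas[of k]] show ?thesis by (simp add: comp_def)
qed

lemma AE_fit_regular:
  "AE d in PiM {..<k} (\<lambda>_. S). fit k d \<in> borel_measurable SX \<and> (\<forall>x\<in>space SX. \<bar>fit k d x\<bar> \<le> M)"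
  using fit_bounded[of k] AE_space
proof eventually_elim
  case (elim d)
  then have "d \<in> space (PiM {..<k} (\<lambda>_. SX \<Otimes>\<^sub>M borel))"
    using sets_eq_imp_space_eq[OF sets_PiM_S[of "{..<k}"]] by simp
  then have "fit k d \<in> borel_measurable SX"
    using measurable_fit_comp[of "\<lambda>_. d" SX k "\<lambda>x. x"] by simp
  then show ?case using elim by simp
qed

lemma measurable_subsample:
  assumes "finite J" "J \<subseteq> I"
  shows "subsample J \<in> PiM I (\<lambda>_. D) \<rightarrow>\<^sub>M PiM {..<card J} (\<lambda>_. S)"
  unfolding measurable_cong_sets[OF refl sets_PiM_S] subsample_def
proof (rule measurable_restrict)
  fix j assume "j \<in> {..<card J}"
  then have "sorted_list_of_set J ! j \<in> I" using sorted_list_of_set_nth_mem[OF assms(1)] assms(2) by auto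
  then show "(\<lambda>\<omega>. obs (\<omega> (sorted_list_of_set J ! j))) \<in> PiM I (\<lambda>_. D) \<rightarrow>\<^sub>M SX \<Otimes>\<^sub>M borel"
    by measurable
qed

lemma distr_subsample:
  assumes J: "finite J"
  shows "distr (PiM J (\<lambda>_. D)) (PiM {..<card J} (\<lambda>_. S)) (subsample J) = PiM {..<card J} (\<lambda>_. S)"
proof -
  let ?k = "card J" and ?nth = "\<lambda>j. sorted_list_of_set J ! j"
  define R where "R = (\<lambda>\<omega>::nat \<Rightarrow> 'x \<times> real \<times> real. \<lambda>j\<in>{..<?k}. \<omega> (?nth j))"
  have mR: "R \<in> PiM J (\<lambda>_. D) \<rightarrow>\<^sub>M PiM {..<?k} (\<lambda>_. D)"
    unfolding R_def using sorted_list_of_set_nth_mem[OF J] by (intro measurable_restrict) auto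
  have dR: "distr (PiM J (\<lambda>_. D)) (PiM {..<?k} (\<lambda>_. D)) R = PiM {..<?k} (\<lambda>_. D)"
    unfolding R_def using distr_PiM_reindex[of J "\<lambda>_. D" ?nth "{..<?k}"] D_prob
      inj_on_nth_sorted_list_of_set[OF J] sorted_list_of_set_nth_mem[OF J] by auto
  have obs_S: "obs \<in> D \<rightarrow>\<^sub>M S" using measurable_obs by (simp add: measurable_cong_sets[OF refl sets_S])
  have mC: "compose {..<?k} obs \<in> PiM {..<?k} (\<lambda>_. D) \<rightarrow>\<^sub>M PiM {..<?k} (\<lambda>_. S)"
    unfolding compose_def using obs_S by measurable
  have "distr D S obs = S"
    by (subst distr_cong[OF refl sets_S refl]) (simp add: S_def)
  then have dC: "distr (PiM {..<?k} (\<lambda>_. D)) (PiM {..<?k} (\<lambda>_. S)) (compose {..<?k} obs) = PiM {..<?k} (\<lambda>_. S)"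
    using distr_PiM_finite_prob_space'[of "{..<?k}" "\<lambda>_. D" "\<lambda>_. S" obs] D_prob prob_space_S obs_S
    by simp
  have "subsample J = compose {..<?k} obs \<circ> R"
    by (rule ext) (auto simp: subsample_def compose_def R_def restrict_def)
  then show ?thesis using distr_distr[OF mC mR] dR dC by simp
qed

lemma borel_measurable_fit_error:
  "(\<lambda>(d, p). (fit k d (fst p) - mu p)\<^sup>2) \<in> borel_measurable (PiM {..<k} (\<lambda>_. S) \<Otimes>\<^sub>M D)"
proof -
  have "fst \<in> PiM {..<k} (\<lambda>_. S) \<Otimes>\<^sub>M D \<rightarrow>\<^sub>M PiM {..<k} (\<lambda>_. SX \<Otimes>\<^sub>M borel)"
    using measurable_fst[of "PiM {..<k} (\<lambda>_. S)" D] by (simp add: measurable_cong_sets[OF refl sets_PiM_S])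
  then have [measurable]: "(\<lambda>q. fit k (fst q) (fst (snd q))) \<in> borel_measurable (PiM {..<k} (\<lambda>_. S) \<Otimes>\<^sub>M D)"
    by (rule measurable_fit_comp) measurable
  show ?thesis by (simp add: case_prod_beta)
qed

lemma borel_measurable_mse_fit[measurable]: "(\<lambda>d. mse (fit k d)) \<in> borel_measurable (PiM {..<k} (\<lambda>_. S))"
  unfolding mse_def using borel_measurable_fit_error
  by (intro D.borel_measurable_lebesgue_integral) (simp add: case_prod_beta)

lemma AE_mse_fit_bounds: "AE d in PiM {..<k} (\<lambda>_. S). 0 \<le> mse (fit k d) \<and> mse (fit k d) \<le> 4 * M\<^sup>2"
  using AE_fit_regular by eventually_elim (use mse_le mse_nonneg in blast)

lemma integrable_mse_fit: "integrable (PiM {..<k} (\<lambda>_. S)) (\<lambda>d. mse (fit k d))"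
proof -
  interpret prob_space "PiM {..<k} (\<lambda>_. S)" by (rule prob_space_PiM_S)
  show ?thesis
    by (rule integrable_const_bound[where B = "4 * M\<^sup>2"])
      (use AE_mse_fit_bounds[of k] in \<open>auto elim: eventually_mono\<close>)
qed

lemma integrable_oracle_risk_mse_fit:
  "integrable (PiM {..<k} (\<lambda>_. S)) (\<lambda>d. oracle_risk s2 (mse (fit k d)))"
  using AE_mse_fit_bounds
  by (intro integrable_oracle_risk[OF prob_space_PiM_S s2_pos borel_measurable_mse_fit]) auto

lemma integral_fit_error_eq_mse:
  "(\<integral>(d, p). (fit k d (fst p) - mu p)\<^sup>2 \<partial>(PiM {..<k} (\<lambda>_. S) \<Otimes>\<^sub>M D))
    = (\<integral>d. mse (fit k d) \<partial>PiM {..<k} (\<lambda>_. S))"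
proof -
  interpret Q: prob_space "PiM {..<k} (\<lambda>_. S)" by (rule prob_space_PiM_S)
  interpret pair_sigma_finite "PiM {..<k} (\<lambda>_. S)" D
    by (simp add: pair_sigma_finite_def Q.sigma_finite_measure_axioms D.sigma_finite_measure_axioms)
  have "integrable (PiM {..<k} (\<lambda>_. S) \<Otimes>\<^sub>M D) (\<lambda>(d, p). (fit k d (fst p) - mu p)\<^sup>2)"
  proof (rule Fubini_integrable[OF borel_measurable_fit_error])
    show "integrable (PiM {..<k} (\<lambda>_. S)) (\<lambda>d. \<integral>p. norm ((\<lambda>(d, p). (fit k d (fst p) - mu p)\<^sup>2) (d, p)) \<partial>D)"
      using integrable_mse_fit by (simp add: mse_def)
    show "AE d in PiM {..<k} (\<lambda>_. S). integrable D (\<lambda>p. (\<lambda>(d, p). (fit k d (fst p) - mu p)\<^sup>2) (d, p))"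
      using AE_fit_regular by eventually_elim (use integrable_fit_error_sq in auto)
  qed
  from integral_fst'[OF this] show ?thesis by (simp add: mse_def)
qed

lemma integral_oracle_risk_fit_le:
  "(\<integral>d. oracle_risk s2 (mse (fit k d)) \<partial>PiM {..<k} (\<lambda>_. S))
    \<le> oracle_risk s2 (\<integral>(d, p). (fit k d (fst p) - mu p)\<^sup>2 \<partial>(PiM {..<k} (\<lambda>_. S) \<Otimes>\<^sub>M D))"
  unfolding integral_fit_error_eq_mse
  using AE_mse_fit_bounds
  by (intro integral_oracle_risk_le[OF prob_space_PiM_S s2_pos integrable_mse_fit]) auto

lemma borel_measurable_cross_fit_loss:
  assumes J1: "finite J1" "J1 \<subseteq> I" and J2: "J2 \<subseteq> I" "i \<in> J2"
  shows "(\<lambda>\<omega>. shrinkage_loss (fit (card J1) (subsample J1 \<omega>)) J2 \<omega> i) \<in> borel_measurable (PiM I (\<lambda>_. D))"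
proof -
  have sub: "subsample J1 \<in> PiM I (\<lambda>_. D) \<rightarrow>\<^sub>M PiM {..<card J1} (\<lambda>_. SX \<Otimes>\<^sub>M borel)"
    using measurable_subsample[OF J1] by (simp add: measurable_cong_sets[OF refl sets_PiM_S])
  have [measurable]: "(\<lambda>\<omega>. fit (card J1) (subsample J1 \<omega>) (fst (\<omega> l))) \<in> borel_measurable (PiM I (\<lambda>_. D))"
    if "l \<in> J2" for l
    using measurable_comp[OF measurable_component_singleton[of l I "\<lambda>_. D"] measurable_covariate] that J2
    by (intro measurable_fit_comp[OF sub]) (auto simp: comp_def)
  have [measurable]: "(\<lambda>\<omega>. z (\<omega> l)) \<in> borel_measurable (PiM I (\<lambda>_. D))"
    "(\<lambda>\<omega>. mu (\<omega> l)) \<in> borel_measurable (PiM I (\<lambda>_. D))" if "l \<in> J2" for l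
    using measurable_comp[OF measurable_component_singleton[of l I "\<lambda>_. D"]] that J2
      borel_measurable_z borel_measurable_mu by (auto simp: comp_def)
  show ?thesis
    unfolding shrinkage_loss_def tstar_def Ahat_def using J2(2) by measurable
qed

lemma nn_integral_cross_fit_loss_eq:
  assumes J: "finite J1" "finite J2" "J1 \<inter> J2 = {}" "i \<in> J2"
  shows "(\<integral>\<^sup>+\<omega>. ennreal (shrinkage_loss (fitted_on fit J1 \<omega>) J2 \<omega> i) \<partial>PiM (J1 \<union> J2) (\<lambda>_. D))
    = (\<integral>\<^sup>+x. (\<integral>\<^sup>+y. ennreal (shrinkage_loss (fit (card J1) (subsample J1 x)) J2 y i)
          \<partial>PiM J2 (\<lambda>_. D)) \<partial>PiM J1 (\<lambda>_. D))"
proof -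
  interpret product_prob_space "\<lambda>_. D" "J1 \<union> J2" using D_prob by (intro product_prob_spaceI)
  let ?L = "\<lambda>d y. ennreal (shrinkage_loss (fit (card J1) d) J2 y i)"
  have meas: "(\<lambda>\<omega>. ?L (subsample J1 \<omega>) \<omega>) \<in> borel_measurable (PiM (J1 \<union> J2) (\<lambda>_. D))"
    using borel_measurable_cross_fit_loss[of J1 "J1 \<union> J2" J2 i] J by auto
  have "(\<integral>\<^sup>+\<omega>. ennreal (shrinkage_loss (fitted_on fit J1 \<omega>) J2 \<omega> i) \<partial>PiM (J1 \<union> J2) (\<lambda>_. D))
      = (\<integral>\<^sup>+x. (\<integral>\<^sup>+y. ?L (subsample J1 (merge J1 J2 (x, y))) (merge J1 J2 (x, y)) \<partial>PiM J2 (\<lambda>_. D))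
          \<partial>PiM J1 (\<lambda>_. D))"
    unfolding fitted_on_eq_subsample by (rule product_nn_integral_fold[OF J(3,1,2) meas])
  then show ?thesis
    using J by (simp add: subsample_merge shrinkage_loss_merge)
qed

text \<open>Conditionally on the half J1 that produces the fitted function, the other half J2 is
  still an i.i.d. sample from D, so the bound for a fixed regression function applies inside.\<close>
lemma nn_integral_cross_fit_loss_le:
  assumes J: "finite J1" "finite J2" "J1 \<inter> J2 = {}" "i \<in> J2" and t: "t > 0"
  defines "c \<equiv> t / (2 * card J2) * envelope_moment + 25 * envelope_moment / (2 * t * s2\<^sup>2)"
  shows "(\<integral>\<^sup>+\<omega>. ennreal (shrinkage_loss (fitted_on fit J1 \<omega>) J2 \<omega> i) \<partial>PiM (J1 \<union> J2) (\<lambda>_. D))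
    \<le> ennreal ((\<integral>d. oracle_risk s2 (mse (fit (card J1) d)) \<partial>PiM {..<card J1} (\<lambda>_. S)) + c)"
proof -
  let ?k = "card J1" and ?Q = "PiM {..<card J1} (\<lambda>_. S)"
  let ?G = "\<lambda>d. oracle_risk s2 (mse (fit ?k d)) + c"
  interpret Q: prob_space ?Q by (rule prob_space_PiM_S)
  have c: "c \<ge> 0" using t envelope_moment_nonneg s2_pos by (simp add: c_def)
  have G_int: "integrable ?Q ?G" using integrable_oracle_risk_mse_fit by simp
  have sub: "subsample J1 \<in> PiM J1 (\<lambda>_. D) \<rightarrow>\<^sub>M ?Q"
    using measurable_subsample[OF J(1)] by simp
  have G_nonneg: "AE d in ?Q. 0 \<le> ?G d"
    using AE_mse_fit_bounds by eventually_elim (use c s2_pos oracle_risk_nonneg in auto)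
  have "AE x in PiM J1 (\<lambda>_. D). fit ?k (subsample J1 x) \<in> borel_measurable SX
      \<and> (\<forall>v\<in>space SX. \<bar>fit ?k (subsample J1 x) v\<bar> \<le> M)"
    using AE_distrD[OF sub] AE_fit_regular[of ?k] unfolding distr_subsample[OF J(1)] by blast
  moreover have "(\<integral>\<^sup>+y. ennreal (shrinkage_loss (fit ?k d) J2 y i) \<partial>PiM J2 (\<lambda>_. D)) \<le> ennreal (?G d)"
    if "fit ?k d \<in> borel_measurable SX \<and> (\<forall>v\<in>space SX. \<bar>fit ?k d v\<bar> \<le> M)" for d
    using nn_integral_shrinkage_loss_le[OF conjunct1[OF that] conjunct2[OF that] J(2,4) t]
    by (simp add: c_def add.assoc)
  ultimately have "(\<integral>\<^sup>+x. (\<integral>\<^sup>+y. ennreal (shrinkage_loss (fit ?k (subsample J1 x)) J2 y i)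
      \<partial>PiM J2 (\<lambda>_. D)) \<partial>PiM J1 (\<lambda>_. D)) \<le> (\<integral>\<^sup>+x. ennreal (?G (subsample J1 x)) \<partial>PiM J1 (\<lambda>_. D))"
    by (intro nn_integral_mono_AE) (auto elim: eventually_mono)
  also have "\<dots> = (\<integral>\<^sup>+d. ennreal (?G d) \<partial>?Q)"
    using nn_integral_distr[OF sub, of "\<lambda>d. ennreal (?G d)"] distr_subsample[OF J(1)]
    by (simp add: oracle_risk_def)
  also have "\<dots> = ennreal (\<integral>d. ?G d \<partial>?Q)"
    using G_int G_nonneg by (intro nn_integral_eq_integral) auto
  also have "(\<integral>d. ?G d \<partial>?Q) = (\<integral>d. oracle_risk s2 (mse (fit ?k d)) \<partial>?Q) + c"
    using integrable_oracle_risk_mse_fit by (simp add: Q.prob_space)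
  finally show ?thesis
    using nn_integral_cross_fit_loss_eq[OF J(1-4)] by simp
qed

lemma integral_sq_error_ebcf_le:
  assumes part: "I1 \<union> I2 = {..<n}" "I1 \<inter> I2 = {}" "card I1 = k" "card I2 = k"
    and i: "i < n" and t: "t > 0"
  shows "(\<integral>\<omega>. (mu (\<omega> i) - ebcf s2 fit I1 I2 \<omega> i)\<^sup>2 \<partial>PiM {..<n} (\<lambda>_. D))
    \<le> (\<integral>d. oracle_risk s2 (mse (fit k d)) \<partial>PiM {..<k} (\<lambda>_. S))
       + (t / (2 * k) * envelope_moment + 25 * envelope_moment / (2 * t * s2\<^sup>2))"
    (is "?lhs \<le> ?rhs")
proof (rule integral_real_bounded)
  have fin: "finite I1" "finite I2" using part(1) by (metis finite_Un finite_lessThan)+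
  have "AE d in PiM {..<k} (\<lambda>_. S). 0 \<le> oracle_risk s2 (mse (fit k d))"
    using AE_mse_fit_bounds[of k] by eventually_elim (use s2_pos oracle_risk_nonneg in auto)
  then show "0 \<le> ?rhs"
    using t s2_pos envelope_moment_nonneg by (intro add_nonneg_nonneg integral_nonneg_AE) auto
  consider "i \<in> I2" | "i \<in> I1" "i \<notin> I2" using i part(1) by auto
  then show "(\<integral>\<^sup>+\<omega>. ennreal ((mu (\<omega> i) - ebcf s2 fit I1 I2 \<omega> i)\<^sup>2) \<partial>PiM {..<n} (\<lambda>_. D)) \<le> ennreal ?rhs"
  proof cases
    case 1
    then show ?thesis
      using nn_integral_cross_fit_loss_le[OF fin part(2) 1 t] part by (simp add: sq_error_ebcf_eq)
  next
    case 2
    have "{..<n} = I2 \<union> I1" using part(1) by auto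
    then show ?thesis
      using nn_integral_cross_fit_loss_le[OF fin(2,1) _ 2(1) t] part 2 by (simp add: sq_error_ebcf_eq Int_commute)
  qed
qed

lemma ebcf_risk_le:
  assumes n: "even n" "n \<ge> 2"
    and part: "I1 \<union> I2 = {..<n}" "I1 \<inter> I2 = {}" "card I1 = n div 2" "card I2 = n div 2"
  defines "R \<equiv> \<integral>(d, p). (fit (n div 2) d (fst p) - mu p)\<^sup>2 \<partial>(PiM {..<n div 2} (\<lambda>_. S) \<Otimes>\<^sub>M D)"
  shows "(\<Sum>i<n. \<integral>\<omega>. (mu (\<omega> i) - ebcf s2 fit I1 I2 \<omega> i)\<^sup>2 \<partial>PiM {..<n} (\<lambda>_. D)) / n
    \<le> oracle_risk s2 R + envelope_moment * (1 + 25 / (2 * s2\<^sup>2)) / sqrt n"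
proof -
  let ?k = "n div 2" and ?c = "envelope_moment * (1 + 25 / (2 * s2\<^sup>2)) / sqrt n"
  have k: "real n = 2 * real ?k" using n(1) by (auto elim!: evenE)
  have t: "sqrt n > 0" using n(2) by simp
  \<comment> \<open>t = \<surd>n balances the two error terms t/n and 1/t\<close>
  have c: "sqrt n / (2 * ?k) * envelope_moment + 25 * envelope_moment / (2 * sqrt n * s2\<^sup>2) = ?c"
  proof -
    have "sqrt n / (2 * ?k) = 1 / sqrt n" using k t by (simp add: field_simps flip: of_nat_mult)
    then show ?thesis using t s2_pos by (simp add: field_simps)
  qed
  have "(\<Sum>i<n. \<integral>\<omega>. (mu (\<omega> i) - ebcf s2 fit I1 I2 \<omega> i)\<^sup>2 \<partial>PiM {..<n} (\<lambda>_. D))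
      \<le> (\<Sum>i<n. (\<integral>d. oracle_risk s2 (mse (fit ?k d)) \<partial>PiM {..<?k} (\<lambda>_. S)) + ?c)"
    using integral_sq_error_ebcf_le[OF part _ t] c by (intro sum_mono) simp
  also have "\<dots> \<le> n * (oracle_risk s2 R + ?c)"
    using integral_oracle_risk_fit_le[of ?k] by (simp add: R_def mult_left_mono)
  finally show ?thesis using n(2) by (simp add: divide_le_eq mult.commute)
qed

end

theorem corollary1:
  fixes SX :: "'x measure"
    and D :: "('x \<times> real \<times> real) measure"
    and fit :: "nat \<Rightarrow> (nat \<Rightarrow> 'x \<times> real) \<Rightarrow> 'x \<Rightarrow> real"
    and s2 \<Gamma> M :: real
  defines "F \<equiv> vimage_algebra (space D) (\<lambda>p. (fst p, fst (snd p))) (SX \<Otimes>\<^sub>M borel)"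
      and "S \<equiv> distr D (SX \<Otimes>\<^sub>M borel) obs"
  assumes D_prob: "prob_space D"
    and D_sets: "sets D = sets (SX \<Otimes>\<^sub>M borel \<Otimes>\<^sub>M borel)"
    and s2_pos: "s2 > 0"
    and cond_mean: "AE p in D. real_cond_exp D F (\<lambda>p. snd (snd p)) p = fst (snd p)"
    and cond_var: "AE p in D. real_cond_exp D F
                      (\<lambda>p. (snd (snd p) - real_cond_exp D F (\<lambda>q. snd (snd q)) p)\<^sup>2) p = s2"
    and fourth_moment: "AE p in D. nn_cond_exp D F (\<lambda>p. ennreal ((snd (snd p)) ^ 4)) p \<le> ennreal (\<Gamma> ^ 4)"
    and mu_bounded: "AE p in D. \<bar>fst (snd p)\<bar> \<le> M"
    and fit_meas: "\<And>m. (\<lambda>(d, x). fit m d x)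
                      \<in> borel_measurable ((\<Pi>\<^sub>M j\<in>{..<m}. SX \<Otimes>\<^sub>M borel) \<Otimes>\<^sub>M SX)"
    and fit_bounded: "\<And>m. AE d in (\<Pi>\<^sub>M j\<in>{..<m}. S). \<forall>x\<in>space SX. \<bar>fit m d x\<bar> \<le> M"
  shows "\<exists>C. \<forall>n I1 I2. even n \<and> n \<ge> 2 \<and> I1 \<union> I2 = {..<n} \<and> I1 \<inter> I2 = {}
            \<and> card I1 = n div 2 \<and> card I2 = n div 2 \<longrightarrow>
          (let R = (\<integral>(d, p). (fit (n div 2) d (fst p) - fst (snd p))\<^sup>2
                        \<partial>((\<Pi>\<^sub>M j\<in>{..<n div 2}. S) \<Otimes>\<^sub>M D))
           in (\<Sum>i<n. \<integral>\<omega>. (fst (snd (\<omega> i)) - ebcf s2 fit I1 I2 \<omega> i)\<^sup>2 \<partial>(\<Pi>\<^sub>M j\<in>{..<n}. D)) / real n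
              \<le> s2 * R / (s2 + R) + C / sqrt (real n))"
proof -
  interpret ebcf_cross_fit SX D s2 \<Gamma> M F fit S
    using D_prob D_sets s2_pos cond_mean cond_var fourth_moment mu_bounded fit_meas fit_bounded
    by (intro ebcf_cross_fit.intro ebcf_model.intro ebcf_cross_fit_axioms.intro) (simp_all add: F_def S_def)
  show ?thesis
    by (intro exI[of _ "envelope_moment * (1 + 25 / (2 * s2\<^sup>2))"] allI impI)
      (use ebcf_risk_le in \<open>auto simp: Let_def oracle_risk_def\<close>)
qed

end
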